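(* Let $G$ be a weakly-reversible chemical reaction network in $s$ species and let $(\mathcal{E}_G)\subseteq\mathbf{k}[x_1,\dots,x_s]$ ($\mathbf{k}$ a field of characteristic zero) be the ideal generated by its associated event-system. Then $G$ is catalytic if and only if $(\mathcal{E}_G)\subsetneq(\mathcal{E}_G):(x_1x_2\cdots x_s)^\infty$.
   Context: A chemical reaction network (CRN) consists of positive integers $s,n$, a finite directed graph $G$ with vertex set $\{1,\dots,n\}$ and edge set $E(G)$, and an injective labeling of vertex $i$ by a monic monomial $\psi_i=\prod_{j=1}^s x_j^{y_{ij}}$, $y_{ij}\in\mathbb{Z}_{\ge0}$. $G$ is weakly-reversible iff each connected component is strongly connected. The associated event-system $\mathcal{E}_G$ is the set of binomials $\psi_i-\psi_j$, one for each pair $\{i,j\}$ with $(i,j)\in E(G)$ or $(j,i)\in E(G)$. The event-graph $\overline{G}$ has as vertices all monic monomials in $x_1,\dots,x_s$, with an edge $(N\psi_i,N\psi_j)$ for each $(i,j)\in E(G)$ and each monic monomial $N$. A weakly-reversible CRN $G$ is catalytic iff there exist monic monomials $M,N$ that are path-connected in $\overline{G}$ such that $M/\gcd(M,N)$ and $N/\gcd(M,N)$ are not path-connected in $\overline{G}$. For an ideal $I$ and polynomial $f$, the saturation is $I:f^\infty=\{g : f^kg\in I \text{ for some } k>0\}$. *)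

theory Defs
  imports Main "HOL-Library.Poly_Mapping"
begin

(* Species x_1..x_s are indexed 0..<s; vertices 1..n are indexed 0..<n.
   A monic monomial prod_j x_j^(m j) is its exponent vector m :: nat \<Rightarrow>\<^sub>0 nat
   with Poly_Mapping.keys m \<subseteq> {..<s}; products of monomials are sums of exponent vectors. *)

definition monomials :: "nat \<Rightarrow> (nat \<Rightarrow>\<^sub>0 nat) set" where
  "monomials s = {m. Poly_Mapping.keys m \<subseteq> {..<s}}"

lift_definition mono_gcd :: "(nat \<Rightarrow>\<^sub>0 nat) \<Rightarrow> (nat \<Rightarrow>\<^sub>0 nat) \<Rightarrow> (nat \<Rightarrow>\<^sub>0 nat)"
  is "\<lambda>f g k. min (f k) (g k)"
proof -
  fix f g :: "nat \<Rightarrow> nat"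
  assume "finite {k. f k \<noteq> 0}"
  moreover have "{k. min (f k) (g k) \<noteq> 0} \<subseteq> {k. f k \<noteq> 0}" by auto
  ultimately show "finite {k. min (f k) (g k) \<noteq> 0}" by (rule finite_subset[rotated])
qed

(* monomial division M / D for D dividing M: exponentwise subtraction *)
definition mono_div :: "(nat \<Rightarrow>\<^sub>0 nat) \<Rightarrow> (nat \<Rightarrow>\<^sub>0 nat) \<Rightarrow> (nat \<Rightarrow>\<^sub>0 nat)" where
  "mono_div M D = M - D"

definition is_crn :: "nat \<Rightarrow> nat \<Rightarrow> (nat \<times> nat) set \<Rightarrow> (nat \<Rightarrow> (nat \<Rightarrow>\<^sub>0 nat)) \<Rightarrow> bool" where
  "is_crn s n E psi \<longleftrightarrow> 0 < s \<and> 0 < n \<and> E \<subseteq> {..<n} \<times> {..<n}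
     \<and> (\<forall>i<n. psi i \<in> monomials s) \<and> inj_on psi {..<n}"

definition weakly_reversible :: "nat \<Rightarrow> (nat \<times> nat) set \<Rightarrow> bool" where
  "weakly_reversible n E \<longleftrightarrow>
     (\<forall>i<n. \<forall>j<n. (i, j) \<in> (E \<union> E\<inverse>)\<^sup>* \<longrightarrow> (i, j) \<in> E\<^sup>* \<and> (j, i) \<in> E\<^sup>*)"

definition event_edges :: "nat \<Rightarrow> (nat \<times> nat) set \<Rightarrow> (nat \<Rightarrow> (nat \<Rightarrow>\<^sub>0 nat))
    \<Rightarrow> ((nat \<Rightarrow>\<^sub>0 nat) \<times> (nat \<Rightarrow>\<^sub>0 nat)) set" where
  "event_edges s E psi = {(N + psi i, N + psi j) | N i j. N \<in> monomials s \<and> (i, j) \<in> E}"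

definition event_connected :: "nat \<Rightarrow> (nat \<times> nat) set \<Rightarrow> (nat \<Rightarrow> (nat \<Rightarrow>\<^sub>0 nat))
    \<Rightarrow> (nat \<Rightarrow>\<^sub>0 nat) \<Rightarrow> (nat \<Rightarrow>\<^sub>0 nat) \<Rightarrow> bool" where
  "event_connected s E psi M N \<longleftrightarrow>
     (M, N) \<in> (event_edges s E psi \<union> (event_edges s E psi)\<inverse>)\<^sup>*"

definition catalytic :: "nat \<Rightarrow> (nat \<times> nat) set \<Rightarrow> (nat \<Rightarrow> (nat \<Rightarrow>\<^sub>0 nat)) \<Rightarrow> bool" where
  "catalytic s E psi \<longleftrightarrow>
     (\<exists>M \<in> monomials s. \<exists>N \<in> monomials s. event_connected s E psi M N \<and>
        \<not> event_connected s E psi (mono_div M (mono_gcd M N)) (mono_div N (mono_gcd M N)))"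

(* Polynomials in k[x_1..x_s]: finitely supported maps from exponent vectors to coefficients,
   with multiplication by convolution (library instance). *)
definition polys :: "nat \<Rightarrow> ((nat \<Rightarrow>\<^sub>0 nat) \<Rightarrow>\<^sub>0 'k::comm_ring_1) set" where
  "polys s = {p. Poly_Mapping.keys p \<subseteq> monomials s}"

definition monom_poly :: "(nat \<Rightarrow>\<^sub>0 nat) \<Rightarrow> ((nat \<Rightarrow>\<^sub>0 nat) \<Rightarrow>\<^sub>0 'k::comm_ring_1)" where
  "monom_poly m = Poly_Mapping.single m 1"

definition event_system :: "(nat \<times> nat) set \<Rightarrow> (nat \<Rightarrow> (nat \<Rightarrow>\<^sub>0 nat))
    \<Rightarrow> ((nat \<Rightarrow>\<^sub>0 nat) \<Rightarrow>\<^sub>0 'k::comm_ring_1) set" where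
  "event_system E psi = {monom_poly (psi i) - monom_poly (psi j) | i j. (i, j) \<in> E}"

definition ideal_gen :: "nat \<Rightarrow> ((nat \<Rightarrow>\<^sub>0 nat) \<Rightarrow>\<^sub>0 'k::comm_ring_1) set
    \<Rightarrow> ((nat \<Rightarrow>\<^sub>0 nat) \<Rightarrow>\<^sub>0 'k) set" where
  "ideal_gen s F = {(\<Sum>g\<in>S. c g * g) | S c. finite S \<and> S \<subseteq> F \<and> (\<forall>g\<in>S. c g \<in> polys s)}"

definition saturation :: "nat \<Rightarrow> ((nat \<Rightarrow>\<^sub>0 nat) \<Rightarrow>\<^sub>0 'k::comm_ring_1) set
    \<Rightarrow> ((nat \<Rightarrow>\<^sub>0 nat) \<Rightarrow>\<^sub>0 'k) \<Rightarrow> ((nat \<Rightarrow>\<^sub>0 nat) \<Rightarrow>\<^sub>0 'k) set" where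
  "saturation s I f = {g \<in> polys s. \<exists>k>0. f ^ k * g \<in> I}"

definition all_vars_monomial :: "nat \<Rightarrow> (nat \<Rightarrow>\<^sub>0 nat)" where
  "all_vars_monomial s = (\<Sum>j<s. Poly_Mapping.single j 1)"

end

theory Submission
  imports Defs
begin

(*
  The ideal generated by the event-system is spanned by the binomials x^a - x^b with a and b
  connected in the event-graph, so a polynomial lies in it exactly when its coefficients sum
  to zero over every union of connected components. Multiplication by a monomial x^W maps
  components into components; hence the ideal is saturated with respect to x_1...x_s precisely
  when connectivity can be cancelled, i.e. W + u ~ W + v forces u ~ v. Without catalysis this
  holds because gcd(W + u, W + v) = W + gcd(u, v). Conversely, if M ~ N but not M/D ~ N/D for
  D = gcd(M, N), then x^(M/D) - x^(N/D) lies in the saturation, as a large power of x_1...x_s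
  is a multiple of x^D, but not in the ideal.
*)

type_synonym monomial = "nat \<Rightarrow>\<^sub>0 nat"

lemma monomials_iff: "m \<in> monomials s \<longleftrightarrow> (\<forall>j\<ge>s. Poly_Mapping.lookup m j = 0)"
  unfolding monomials_def by (auto simp: in_keys_iff subset_iff) (metis leI neq0_conv)

lemma monomials_zero: "0 \<in> monomials s"
  by (simp add: monomials_def)

lemma monomials_add: "a \<in> monomials s \<Longrightarrow> b \<in> monomials s \<Longrightarrow> a + b \<in> monomials s"
  by (simp add: monomials_iff lookup_add)

lemma monomials_add_cancel_left: "a + b \<in> monomials s \<Longrightarrow> b \<in> monomials s"
  by (simp add: monomials_iff lookup_add)

lemma monomials_diff: "a \<in> monomials s \<Longrightarrow> a - b \<in> monomials s"
  by (simp add: monomials_iff lookup_minus)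

lemma monomials_sum: "(\<And>i. i \<in> I \<Longrightarrow> m i \<in> monomials s) \<Longrightarrow> sum m I \<in> monomials s"
  by (induction I rule: infinite_finite_induct) (simp_all add: monomials_zero monomials_add)

lemma lookup_mono_gcd [simp]:
  "Poly_Mapping.lookup (mono_gcd a b) k = min (Poly_Mapping.lookup a k) (Poly_Mapping.lookup b k)"
  by transfer simp

lemma monomials_mono_gcd: "a \<in> monomials s \<Longrightarrow> mono_gcd a b \<in> monomials s"
  by (simp add: monomials_iff)

lemma mono_gcd_add_left: "mono_gcd (c + a) (c + b) = c + mono_gcd a b"
  by (rule poly_mapping_eqI) (simp add: lookup_add)

lemma mono_gcd_add_diff1: "mono_gcd a b + (a - mono_gcd a b) = a"
  by (rule poly_mapping_eqI) (simp add: lookup_add lookup_minus)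

lemma mono_gcd_add_diff2: "mono_gcd a b + (b - mono_gcd a b) = b"
  by (rule poly_mapping_eqI) (simp add: lookup_add lookup_minus)

lemma monom_poly_mult: "monom_poly a * monom_poly b = monom_poly (a + b)"
  by (simp add: monom_poly_def mult_single)

lemma monom_poly_power: "monom_poly a ^ k = monom_poly (\<Sum>_<k. a)"
  by (induction k) (simp_all del: sum_constant add: monom_poly_mult add.commute, simp add: monom_poly_def)

lemma lookup_all_vars_monomial:
  "Poly_Mapping.lookup (all_vars_monomial s) j = (if j < s then 1 else 0)"
  unfolding all_vars_monomial_def by (simp add: lookup_sum lookup_single when_def)

lemma all_vars_monomial_in_monomials: "all_vars_monomial s \<in> monomials s"
  by (simp add: monomials_iff lookup_all_vars_monomial)

lemma all_vars_power_multiple: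
  assumes "m \<in> monomials s"
  obtains k R where "k > 0" "R \<in> monomials s"
    "(monom_poly (all_vars_monomial s) :: monomial \<Rightarrow>\<^sub>0 'k::comm_ring_1) ^ k = monom_poly (R + m)"
proof
  define k where "k = Suc (Max (Poly_Mapping.lookup m ` {..<s}))"
  define P where "P = (\<Sum>_<k. all_vars_monomial s)"
  have m_le: "Poly_Mapping.lookup m j \<le> Poly_Mapping.lookup P j" for j
  proof (cases "j < s")
    case True
    then have "Poly_Mapping.lookup m j \<le> Max (Poly_Mapping.lookup m ` {..<s})" by (intro Max_ge) auto
    moreover have "Poly_Mapping.lookup P j = k"
      using True unfolding P_def lookup_sum by (simp add: lookup_all_vars_monomial)
    ultimately show ?thesis by (simp add: k_def)
  qed (use assms in \<open>simp add: monomials_iff\<close>)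
  show "k > 0" by (simp add: k_def)
  show "P - m \<in> monomials s"
    unfolding P_def by (intro monomials_diff monomials_sum all_vars_monomial_in_monomials)
  have "P - m + m = P"
    by (rule poly_mapping_eqI) (simp add: lookup_add lookup_minus m_le)
  then show "(monom_poly (all_vars_monomial s) :: monomial \<Rightarrow>\<^sub>0 'k) ^ k = monom_poly (P - m + m)"
    by (simp add: monom_poly_power P_def)
qed

subsection \<open>Connectivity in the event-graph\<close>

lemma event_connected_refl [simp]: "event_connected s E psi a a"
  by (simp add: event_connected_def)

lemma event_connected_sym: "event_connected s E psi a b \<Longrightarrow> event_connected s E psi b a"
  unfolding event_connected_def
  by (metis converse_Un converse_converse rtrancl_converseI sup_commute)

lemma event_connected_trans:
  "event_connected s E psi a b \<Longrightarrow> event_connected s E psi b c \<Longrightarrow> event_connected s E psi a c"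
  unfolding event_connected_def by (rule rtrancl_trans)

lemma event_connected_edge:
  assumes "(i, j) \<in> E"
  shows "event_connected s E psi (psi i) (psi j)"
proof -
  have "(0 + psi i, 0 + psi j) \<in> event_edges s E psi"
    unfolding event_edges_def using assms monomials_zero by blast
  then show ?thesis unfolding event_connected_def by auto
qed

lemma event_edges_shift:
  assumes "T \<in> monomials s" "(a, b) \<in> event_edges s E psi"
  shows "(T + a, T + b) \<in> event_edges s E psi"
proof -
  from assms(2) obtain N i j where "a = N + psi i" "b = N + psi j" "N \<in> monomials s" "(i, j) \<in> E"
    unfolding event_edges_def by blast
  then show ?thesis unfolding event_edges_def
    by (intro CollectI exI[of _ "T + N"] exI[of _ i] exI[of _ j])
       (simp add: add.assoc monomials_add assms(1))
qed

lemma event_connected_shift: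
  assumes "T \<in> monomials s" "event_connected s E psi a b"
  shows "event_connected s E psi (T + a) (T + b)"
  using assms(2) unfolding event_connected_def
proof (induction rule: rtrancl_induct)
  case (step b c)
  then have "(T + b, T + c) \<in> event_edges s E psi \<union> (event_edges s E psi)\<inverse>"
    using event_edges_shift[OF assms(1)] by auto
  with step.IH show ?case by (rule rtrancl_into_rtrancl)
qed simp

lemma event_edges_monomials:
  assumes "is_crn s n E psi" "(a, b) \<in> event_edges s E psi"
  shows "a \<in> monomials s \<and> b \<in> monomials s"
proof -
  from assms(2) obtain N i j where "a = N + psi i" "b = N + psi j" "N \<in> monomials s" "(i, j) \<in> E"
    unfolding event_edges_def by blast
  moreover have "psi i \<in> monomials s" "psi j \<in> monomials s"
    using assms(1) \<open>(i, j) \<in> E\<close> unfolding is_crn_def by auto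
  ultimately show ?thesis by (simp add: monomials_add)
qed

lemma event_connected_monomials:
  assumes "is_crn s n E psi" "event_connected s E psi a b" "a \<in> monomials s"
  shows "b \<in> monomials s"
  using assms(2,3) unfolding event_connected_def
proof (induction rule: rtrancl_induct)
  case (step b c)
  then show ?case using event_edges_monomials[OF assms(1)] by blast
qed

lemma non_catalytic_cancel:
  assumes "\<not> catalytic s E psi"
    and "u \<in> monomials s" "v \<in> monomials s" "W \<in> monomials s"
    and "event_connected s E psi (W + u) (W + v)"
  shows "event_connected s E psi u v"
proof -
  let ?g = "mono_gcd u v"
  have "W + u \<in> monomials s" "W + v \<in> monomials s"
    using assms(2-4) by (simp_all add: monomials_add)
  with assms(1,5) have "event_connected s E psi
      (mono_div (W + u) (mono_gcd (W + u) (W + v))) (mono_div (W + v) (mono_gcd (W + u) (W + v)))"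
    unfolding catalytic_def by blast
  then have "event_connected s E psi (u - ?g) (v - ?g)"
    by (simp add: mono_div_def mono_gcd_add_left)
  then have "event_connected s E psi (?g + (u - ?g)) (?g + (v - ?g))"
    by (intro event_connected_shift monomials_mono_gcd assms(2))
  then show ?thesis by (simp only: mono_gcd_add_diff1 mono_gcd_add_diff2)
qed

definition event_closed :: "nat \<Rightarrow> (nat \<times> nat) set \<Rightarrow> (nat \<Rightarrow> monomial) \<Rightarrow> monomial set \<Rightarrow> bool"
  where "event_closed s E psi C \<longleftrightarrow> (\<forall>a b. event_connected s E psi a b \<longrightarrow> (a \<in> C \<longleftrightarrow> b \<in> C))"

lemma event_closed_connected_to: "event_closed s E psi {b. \<exists>a\<in>A. event_connected s E psi a b}"
  unfolding event_closed_def
proof (intro allI impI iffI)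
  fix b c assume bc: "event_connected s E psi b c"
  show "b \<in> {b. \<exists>a\<in>A. event_connected s E psi a b} \<Longrightarrow> c \<in> {b. \<exists>a\<in>A. event_connected s E psi a b}"
    using event_connected_trans[OF _ bc] by blast
  show "c \<in> {b. \<exists>a\<in>A. event_connected s E psi a b} \<Longrightarrow> b \<in> {b. \<exists>a\<in>A. event_connected s E psi a b}"
    using event_connected_trans[OF _ event_connected_sym[OF bc]] by blast
qed

lemma non_catalytic_shifted_closure_iff:
  assumes "is_crn s n E psi" "\<not> catalytic s E psi" "event_closed s E psi C"
    and "W \<in> monomials s" "t \<in> monomials s"
  shows "(\<exists>a\<in>(+) W ` C. event_connected s E psi a (W + t)) \<longleftrightarrow> t \<in> C"
proof
  assume "\<exists>a\<in>(+) W ` C. event_connected s E psi a (W + t)"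
  then obtain c where c: "c \<in> C" "event_connected s E psi (W + c) (W + t)" by blast
  have "W + c \<in> monomials s"
    using event_connected_monomials[OF assms(1) event_connected_sym[OF c(2)]] assms(4,5)
    by (simp add: monomials_add)
  then have "event_connected s E psi c t"
    using non_catalytic_cancel[OF assms(2) _ assms(5,4) c(2)] monomials_add_cancel_left by blast
  with c(1) assms(3) show "t \<in> C" unfolding event_closed_def by blast
next
  assume "t \<in> C"
  then show "\<exists>a\<in>(+) W ` C. event_connected s E psi a (W + t)"
    by (intro bexI[of _ "W + t"] event_connected_refl imageI)
qed

lemma polys_zero: "0 \<in> polys s"
  by (simp add: polys_def)

lemma polys_add: "p \<in> polys s \<Longrightarrow> q \<in> polys s \<Longrightarrow> p + q \<in> polys s"
  using keys_add[of p q] by (auto simp: polys_def)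

lemma polys_diff: "p \<in> polys s \<Longrightarrow> q \<in> polys s \<Longrightarrow> p - q \<in> polys s"
  using keys_diff[of p q] by (auto simp: polys_def)

lemma polys_mult: "p \<in> polys s \<Longrightarrow> q \<in> polys s \<Longrightarrow> p * q \<in> polys s"
  using keys_mult[of p q] by (auto simp: polys_def intro!: monomials_add)

lemma polys_single: "m \<in> monomials s \<Longrightarrow> Poly_Mapping.single m c \<in> polys s"
  by (simp add: polys_def)

lemma polys_sum: "(\<And>i. i \<in> I \<Longrightarrow> p i \<in> polys s) \<Longrightarrow> sum p I \<in> polys s"
  using keys_sum[of p I] unfolding polys_def by blast

lemma event_system_polys:
  assumes "is_crn s n E psi" "g \<in> event_system E psi"
  shows "g \<in> polys s"
proof -
  from assms(2) obtain i j where "g = monom_poly (psi i) - monom_poly (psi j)" "(i, j) \<in> E"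
    unfolding event_system_def by blast
  with assms(1) show ?thesis unfolding is_crn_def monom_poly_def
    by (auto intro!: polys_diff polys_single)
qed

lemma ideal_gen_polys: "F \<subseteq> polys s \<Longrightarrow> f \<in> ideal_gen s F \<Longrightarrow> f \<in> polys s"
  unfolding ideal_gen_def by (auto intro!: polys_sum polys_mult)

lemma ideal_gen_zero: "0 \<in> ideal_gen s F"
  unfolding ideal_gen_def by (rule CollectI, rule exI[of _ "{}"]) simp

lemma ideal_gen_base: "g \<in> F \<Longrightarrow> g \<in> ideal_gen s F"
  unfolding ideal_gen_def
  by (intro CollectI exI[of _ "{g}"] exI[of _ "\<lambda>_. 1"]) (simp add: polys_def monomials_zero)

lemma ideal_gen_mult:
  assumes "p \<in> polys s" "f \<in> ideal_gen s F"
  shows "p * f \<in> ideal_gen s F"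
proof -
  from assms(2) obtain S c where f: "f = (\<Sum>g\<in>S. c g * g)" "finite S" "S \<subseteq> F"
      "\<forall>g\<in>S. c g \<in> polys s"
    unfolding ideal_gen_def by blast
  have "p * f = (\<Sum>g\<in>S. (p * c g) * g)" unfolding f(1) by (simp add: sum_distrib_left mult.assoc)
  moreover have "\<forall>g\<in>S. p * c g \<in> polys s" using f(4) assms(1) by (auto intro: polys_mult)
  ultimately show ?thesis unfolding ideal_gen_def using f(2,3)
    by (intro CollectI exI[of _ S] exI[of _ "\<lambda>g. p * c g"]) simp
qed

lemma ideal_gen_add:
  assumes "f \<in> ideal_gen s F" "h \<in> ideal_gen s F"
  shows "f + h \<in> ideal_gen s F"
proof -
  from assms(1) obtain S c where f: "f = (\<Sum>g\<in>S. c g * g)" "finite S" "S \<subseteq> F"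
      "\<forall>g\<in>S. c g \<in> polys s"
    unfolding ideal_gen_def by blast
  from assms(2) obtain T d where h: "h = (\<Sum>g\<in>T. d g * g)" "finite T" "T \<subseteq> F"
      "\<forall>g\<in>T. d g \<in> polys s"
    unfolding ideal_gen_def by blast
  define e where "e g = (if g \<in> S then c g else 0) + (if g \<in> T then d g else 0)" for g
  have "f + h = (\<Sum>g\<in>S \<union> T. (if g \<in> S then c g * g else 0))
        + (\<Sum>g\<in>S \<union> T. (if g \<in> T then d g * g else 0))"
    unfolding f(1) h(1) using f(2) h(2) by (simp add: sum.If_cases Int_absorb1 Int_absorb2)
  also have "\<dots> = (\<Sum>g\<in>S \<union> T. e g * g)"
    by (subst sum.distrib[symmetric]) (rule sum.cong; simp add: e_def distrib_right)
  finally have "f + h = (\<Sum>g\<in>S \<union> T. e g * g)" .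
  moreover have "e g \<in> polys s" for g
    using f(4) h(4) unfolding e_def by (auto intro!: polys_add polys_zero)
  ultimately show ?thesis unfolding ideal_gen_def using f(2,3) h(2,3) by blast
qed

lemma event_binomial_in_ideal_gen:
  assumes "event_connected s E psi a b"
  shows "monom_poly a - monom_poly b \<in> ideal_gen s (event_system E psi :: (monomial \<Rightarrow>\<^sub>0 'k::comm_ring_1) set)"
  using assms unfolding event_connected_def
proof (induction rule: rtrancl_induct)
  case base
  show ?case by (simp add: ideal_gen_zero)
next
  case (step b c)
  have edge: "monom_poly x - monom_poly y
      \<in> ideal_gen s (event_system E psi :: (monomial \<Rightarrow>\<^sub>0 'k) set)"
    if "(x, y) \<in> event_edges s E psi" for x y
  proof -
    from that obtain N i j where "x = N + psi i" "y = N + psi j" "N \<in> monomials s" "(i, j) \<in> E"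
      unfolding event_edges_def by blast
    moreover have "monom_poly (psi i) - monom_poly (psi j) \<in> event_system E psi"
      unfolding event_system_def using \<open>(i, j) \<in> E\<close> by blast
    ultimately have "monom_poly N * (monom_poly (psi i) - monom_poly (psi j))
        \<in> ideal_gen s (event_system E psi :: (monomial \<Rightarrow>\<^sub>0 'k) set)"
      by (intro ideal_gen_mult ideal_gen_base) (simp_all add: monom_poly_def polys_single)
    then show ?thesis using \<open>x = _\<close> \<open>y = _\<close> by (simp add: right_diff_distrib monom_poly_mult)
  qed
  have "monom_poly b - monom_poly c \<in> ideal_gen s (event_system E psi :: (monomial \<Rightarrow>\<^sub>0 'k) set)"
  proof (cases "(b, c) \<in> event_edges s E psi")
    case True
    then show ?thesis by (rule edge)
  next
    case False
    with step.hyps(2) have "(c, b) \<in> event_edges s E psi" by auto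
    then have "- 1 * (monom_poly c - monom_poly b)
        \<in> ideal_gen s (event_system E psi :: (monomial \<Rightarrow>\<^sub>0 'k) set)"
      by (intro ideal_gen_mult edge) (simp add: polys_def monomials_zero)
    then show ?thesis by simp
  qed
  from ideal_gen_add[OF step.IH this] show ?case by simp
qed

subsection \<open>Membership via coefficient sums over components\<close>

definition coeff_sum :: "monomial set \<Rightarrow> (monomial \<Rightarrow>\<^sub>0 'k::comm_ring_1) \<Rightarrow> 'k"
  where "coeff_sum C f = (\<Sum>m\<in>Poly_Mapping.keys f \<inter> C. Poly_Mapping.lookup f m)"

lemma coeff_sum_superset:
  assumes "finite K" "Poly_Mapping.keys f \<subseteq> K"
  shows "coeff_sum C f = (\<Sum>m\<in>K \<inter> C. Poly_Mapping.lookup f m)"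
  unfolding coeff_sum_def
  by (rule sum.mono_neutral_left) (use assms in \<open>auto simp: in_keys_iff\<close>)

lemma coeff_sum_zero [simp]: "coeff_sum C 0 = 0"
  by (simp add: coeff_sum_def)

lemma coeff_sum_add: "coeff_sum C (f + g) = coeff_sum C f + coeff_sum C g"
proof -
  let ?K = "Poly_Mapping.keys f \<union> Poly_Mapping.keys g"
  have "finite ?K" "Poly_Mapping.keys (f + g) \<subseteq> ?K" by (simp_all add: keys_add)
  then show ?thesis
    using coeff_sum_superset[of ?K f C] coeff_sum_superset[of ?K g C] coeff_sum_superset[of ?K "f + g" C]
    by (simp add: lookup_add sum.distrib)
qed

lemma coeff_sum_diff: "coeff_sum C (f - g) = coeff_sum C f - coeff_sum C g"
proof -
  let ?K = "Poly_Mapping.keys f \<union> Poly_Mapping.keys g"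
  have "finite ?K" "Poly_Mapping.keys (f - g) \<subseteq> ?K" by (simp_all add: keys_diff)
  then show ?thesis
    using coeff_sum_superset[of ?K f C] coeff_sum_superset[of ?K g C] coeff_sum_superset[of ?K "f - g" C]
    by (simp add: lookup_minus sum_subtractf)
qed

lemma coeff_sum_sum: "coeff_sum C (sum f I) = (\<Sum>i\<in>I. coeff_sum C (f i))"
  by (induction I rule: infinite_finite_induct) (simp_all add: coeff_sum_add)

lemma coeff_sum_single: "coeff_sum C (Poly_Mapping.single m c) = (if m \<in> C then c else 0)"
  using coeff_sum_superset[of "{m}" "Poly_Mapping.single m c" C] by (simp add: lookup_single)

lemma coeff_sum_cong: "Poly_Mapping.keys f \<inter> C = Poly_Mapping.keys f \<inter> D \<Longrightarrow> coeff_sum C f = coeff_sum D f"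
  by (simp add: coeff_sum_def)

lemma lookup_monom_poly_mult:
  "Poly_Mapping.lookup (monom_poly a * g) (a + m) = Poly_Mapping.lookup g m"
proof -
  have "(\<lambda>q. Poly_Mapping.lookup g q when a + m = a + q) = (\<lambda>q. Poly_Mapping.lookup g q when m = q)"
    by (auto simp: when_def)
  then show ?thesis by (simp add: monom_poly_def lookup_mult lookup_single when_mult mult_when)
qed

lemma coeff_sum_monom_poly_mult:
  "coeff_sum C (monom_poly a * g) = coeff_sum {m. a + m \<in> C} g"
proof -
  have "Poly_Mapping.keys (monom_poly a * g) \<subseteq> (+) a ` Poly_Mapping.keys g"
    using keys_mult[of "monom_poly a" g] by (auto simp: monom_poly_def)
  then have "coeff_sum C (monom_poly a * g)
      = (\<Sum>m\<in>(+) a ` Poly_Mapping.keys g \<inter> C. Poly_Mapping.lookup (monom_poly a * g) m)"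
    by (intro coeff_sum_superset) simp_all
  also have "(+) a ` Poly_Mapping.keys g \<inter> C = (+) a ` (Poly_Mapping.keys g \<inter> {m. a + m \<in> C})"
    by auto
  also have "(\<Sum>m\<in>\<dots>. Poly_Mapping.lookup (monom_poly a * g) m) = coeff_sum {m. a + m \<in> C} g"
    unfolding coeff_sum_def
    by (subst sum.reindex) (auto simp: inj_on_def lookup_monom_poly_mult)
  finally show ?thesis .
qed

lemma coeff_sum_event_binomial_multiple:
  assumes "event_connected s E psi a b" "p \<in> polys s" "event_closed s E psi C"
  shows "coeff_sum C (p * (monom_poly a - monom_poly b)) = 0"
proof -
  have "a + m \<in> C \<longleftrightarrow> b + m \<in> C" if "m \<in> Poly_Mapping.keys p" for m
  proof -
    from that assms(2) have "m \<in> monomials s" by (auto simp: polys_def)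
    then have "event_connected s E psi (m + a) (m + b)" using assms(1) by (rule event_connected_shift)
    with assms(3) show ?thesis unfolding event_closed_def by (simp add: add.commute)
  qed
  then have "coeff_sum {m. a + m \<in> C} p = coeff_sum {m. b + m \<in> C} p"
    by (intro coeff_sum_cong) auto
  then show ?thesis
    by (simp add: right_diff_distrib mult.commute[of p] coeff_sum_diff coeff_sum_monom_poly_mult)
qed

lemma coeff_sum_ideal_gen_event_system:
  assumes "f \<in> ideal_gen s (event_system E psi)" "event_closed s E psi C"
  shows "coeff_sum C f = 0"
proof -
  from assms(1) obtain S c where f: "f = (\<Sum>g\<in>S. c g * g)" "S \<subseteq> event_system E psi"
      "\<forall>g\<in>S. c g \<in> polys s"
    unfolding ideal_gen_def by blast
  have "coeff_sum C (c g * g) = 0" if "g \<in> S" for g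
  proof -
    from that f(2) obtain i j where "g = monom_poly (psi i) - monom_poly (psi j)" "(i, j) \<in> E"
      unfolding event_system_def by blast
    with that f(3) assms(2) show ?thesis
      using coeff_sum_event_binomial_multiple[OF event_connected_edge] by blast
  qed
  then show ?thesis unfolding f(1) by (simp add: coeff_sum_sum)
qed

lemma exists_connected_key:
  fixes f :: "monomial \<Rightarrow>\<^sub>0 'k::comm_ring_1"
  assumes "m \<in> Poly_Mapping.keys f" "coeff_sum {u. event_connected s E psi m u} f = 0"
  obtains u where "u \<in> Poly_Mapping.keys f" "event_connected s E psi m u" "u \<noteq> m"
proof (rule ccontr)
  assume "\<not> thesis"
  with that assms(1) have "Poly_Mapping.keys f \<inter> {u. event_connected s E psi m u} = {m}" by auto
  with assms show False by (simp add: coeff_sum_def in_keys_iff)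
qed

lemma keys_cancel_binomial:
  assumes "u \<in> Poly_Mapping.keys f" "u \<noteq> m"
  defines "c \<equiv> Poly_Mapping.lookup f m"
  shows "Poly_Mapping.keys (f - (Poly_Mapping.single m c - Poly_Mapping.single u c))
    \<subseteq> Poly_Mapping.keys f - {m}"
  using assms by (auto simp: in_keys_iff lookup_minus lookup_single when_def split: if_splits)

lemma ideal_gen_event_system_if_coeff_sums_vanish:
  fixes f :: "monomial \<Rightarrow>\<^sub>0 'k::comm_ring_1"
  assumes "f \<in> polys s" "\<And>C. event_closed s E psi C \<Longrightarrow> coeff_sum C f = 0"
  shows "f \<in> ideal_gen s (event_system E psi)"
  using assms
proof (induction "card (Poly_Mapping.keys f)" arbitrary: f rule: less_induct)
  case less
  show ?case
  proof (cases "f = 0")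
    case True
    then show ?thesis by (simp add: ideal_gen_zero)
  next
    case False
    then obtain m where m: "m \<in> Poly_Mapping.keys f" by fastforce
    have "coeff_sum {u. event_connected s E psi m u} f = 0"
      using less.prems(2)[OF event_closed_connected_to[of s E psi "{m}"]] by simp
    with m obtain u where u: "u \<in> Poly_Mapping.keys f" "event_connected s E psi m u" "u \<noteq> m"
      by (rule exists_connected_key)
    define c where "c = Poly_Mapping.lookup f m"
    define h where "h = Poly_Mapping.single m c - Poly_Mapping.single u c"
    have "Poly_Mapping.single 0 c * (monom_poly m - monom_poly u) \<in> ideal_gen s (event_system E psi)"
      by (intro ideal_gen_mult event_binomial_in_ideal_gen polys_single monomials_zero u(2))
    then have h_ideal: "h \<in> ideal_gen s (event_system E psi)"
      by (simp add: h_def monom_poly_def mult_single right_diff_distrib)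
    have keys: "Poly_Mapping.keys (f - h) \<subseteq> Poly_Mapping.keys f - {m}"
      unfolding h_def c_def using u(1,3) by (rule keys_cancel_binomial)
    have "f - h \<in> ideal_gen s (event_system E psi)"
    proof (rule less.hyps)
      show "card (Poly_Mapping.keys (f - h)) < card (Poly_Mapping.keys f)"
        using keys m by (intro psubset_card_mono) auto
      show "f - h \<in> polys s" using keys less.prems(1) by (auto simp: polys_def)
      fix C assume C: "event_closed s E psi C"
      then have "m \<in> C \<longleftrightarrow> u \<in> C" using u(2) unfolding event_closed_def by blast
      with less.prems(2)[OF C] show "coeff_sum C (f - h) = 0"
        by (simp add: h_def coeff_sum_diff coeff_sum_single)
    qed
    from ideal_gen_add[OF this h_ideal] show ?thesis by simp
  qed
qed

subsection \<open>Saturation\<close>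

lemma ideal_gen_subset_saturation:
  assumes "F \<subseteq> polys s" "f \<in> polys s"
  shows "ideal_gen s F \<subseteq> saturation s (ideal_gen s F) f"
proof
  fix g assume g: "g \<in> ideal_gen s F"
  have "f ^ 1 * g \<in> ideal_gen s F" using ideal_gen_mult[OF assms(2) g] by simp
  with ideal_gen_polys[OF assms(1) g] show "g \<in> saturation s (ideal_gen s F) f"
    unfolding saturation_def by blast
qed

lemma catalytic_not_saturated:
  assumes "catalytic s E psi"
  shows "\<not> saturation s (ideal_gen s (event_system E psi)) (monom_poly (all_vars_monomial s))
    \<subseteq> ideal_gen s (event_system E psi :: (monomial \<Rightarrow>\<^sub>0 'k::comm_ring_1) set)"
proof -
  let ?I = "ideal_gen s (event_system E psi) :: (monomial \<Rightarrow>\<^sub>0 'k) set"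
  from assms obtain M N where MN: "M \<in> monomials s" "N \<in> monomials s" "event_connected s E psi M N"
    and not_conn: "\<not> event_connected s E psi (M - mono_gcd M N) (N - mono_gcd M N)"
    unfolding catalytic_def mono_div_def by blast
  define D where "D = mono_gcd M N"
  obtain k R where kR: "k > 0" "R \<in> monomials s"
    "(monom_poly (all_vars_monomial s) :: monomial \<Rightarrow>\<^sub>0 'k) ^ k = monom_poly (R + D)"
    using all_vars_power_multiple[OF monomials_mono_gcd[OF MN(1)]] unfolding D_def by blast
  define h where "h = monom_poly (M - D) - (monom_poly (N - D) :: monomial \<Rightarrow>\<^sub>0 'k)"
  have "monom_poly (all_vars_monomial s) ^ k * h = monom_poly (R + M) - monom_poly (R + N)"
    unfolding kR(3) h_def D_def
    by (simp add: right_diff_distrib monom_poly_mult add.assoc mono_gcd_add_diff1 mono_gcd_add_diff2)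
  also have "\<dots> \<in> ?I"
    by (intro event_binomial_in_ideal_gen event_connected_shift kR(2) MN(3))
  finally have "monom_poly (all_vars_monomial s) ^ k * h \<in> ?I" .
  moreover have "h \<in> polys s"
    unfolding h_def monom_poly_def using MN(1,2) by (intro polys_diff polys_single monomials_diff)
  ultimately have "h \<in> saturation s ?I (monom_poly (all_vars_monomial s))"
    unfolding saturation_def using kR(1) by blast
  moreover have "h \<notin> ?I"
  proof
    assume "h \<in> ?I"
    then have "coeff_sum {u. event_connected s E psi (M - D) u} h = 0"
      using coeff_sum_ideal_gen_event_system event_closed_connected_to[of s E psi "{M - D}"] by simp
    with not_conn show False by (simp add: h_def D_def monom_poly_def coeff_sum_diff coeff_sum_single)
  qed
  ultimately show ?thesis by blast
qed

lemma non_catalytic_saturated: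
  assumes "is_crn s n E psi" "\<not> catalytic s E psi" "A \<in> monomials s"
  shows "saturation s (ideal_gen s (event_system E psi)) (monom_poly A)
    \<subseteq> ideal_gen s (event_system E psi :: (monomial \<Rightarrow>\<^sub>0 'k::comm_ring_1) set)"
proof
  fix g :: "monomial \<Rightarrow>\<^sub>0 'k"
  assume "g \<in> saturation s (ideal_gen s (event_system E psi)) (monom_poly A)"
  then obtain k where g: "g \<in> polys s" "monom_poly A ^ k * g \<in> ideal_gen s (event_system E psi)"
    unfolding saturation_def by blast
  define W where "W = (\<Sum>_<k. A)"
  have W: "W \<in> monomials s" unfolding W_def by (intro monomials_sum assms(3))
  have gW: "monom_poly W * g \<in> ideal_gen s (event_system E psi)"
    using g(2) by (simp only: monom_poly_power W_def)
  have "coeff_sum C g = 0" if C: "event_closed s E psi C" for C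
  proof -
    let ?C' = "{b. \<exists>a\<in>(+) W ` C. event_connected s E psi a b}"
    have "W + m \<in> ?C' \<longleftrightarrow> m \<in> C" if "m \<in> Poly_Mapping.keys g" for m
      using that g(1) non_catalytic_shifted_closure_iff[OF assms(1,2) C W]
      by (auto simp: polys_def)
    then have "coeff_sum C g = coeff_sum {m. W + m \<in> ?C'} g"
      by (intro coeff_sum_cong) blast
    also have "\<dots> = coeff_sum ?C' (monom_poly W * g)"
      by (rule coeff_sum_monom_poly_mult[symmetric])
    also have "\<dots> = 0"
      by (rule coeff_sum_ideal_gen_event_system[OF gW event_closed_connected_to])
    finally show ?thesis .
  qed
  with g(1) show "g \<in> ideal_gen s (event_system E psi)"
    by (intro ideal_gen_event_system_if_coeff_sums_vanish)
qed

theorem lemma3p2: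
  fixes s n :: nat and E :: "(nat \<times> nat) set" and psi :: "nat \<Rightarrow> (nat \<Rightarrow>\<^sub>0 nat)"
  assumes "is_crn s n E psi"
    and "weakly_reversible n E"
  shows "catalytic s E psi \<longleftrightarrow>
    ideal_gen s (event_system E psi :: ((nat \<Rightarrow>\<^sub>0 nat) \<Rightarrow>\<^sub>0 'k::field_char_0) set)
      \<subset> saturation s (ideal_gen s (event_system E psi)) (monom_poly (all_vars_monomial s))"
proof -
  have "ideal_gen s (event_system E psi :: (monomial \<Rightarrow>\<^sub>0 'k) set)
      \<subseteq> saturation s (ideal_gen s (event_system E psi)) (monom_poly (all_vars_monomial s))"
    using event_system_polys[OF assms(1)] all_vars_monomial_in_monomials
    by (intro ideal_gen_subset_saturation) (auto simp: monom_poly_def polys_single)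
  moreover have "catalytic s E psi \<longleftrightarrow> \<not> saturation s (ideal_gen s (event_system E psi))
      (monom_poly (all_vars_monomial s)) \<subseteq> ideal_gen s (event_system E psi :: (monomial \<Rightarrow>\<^sub>0 'k) set)"
    using catalytic_not_saturated non_catalytic_saturated[OF assms(1) _ all_vars_monomial_in_monomials]
    by blast
  ultimately show ?thesis by (metis less_le_not_le)
qed

end
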